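(* Let $M\in\mathbb R^{N\times N}$ be symmetric positive definite and $\eta>0$. Let $\{a_k\}_{k\ge1}$ be a nonnegative sequence and $\{z_k\}_{k\ge0}$ a sequence in $\mathbb R^N$ with $z_1=z_0$. Fix $z^*\in\mathbb R^N$ and define $w_k=\eta(z_k-z^* )+a_k(z_k-z_{k-1})$ for $k\ge1$. Assume $W:=\sup_{k\ge1}\|w_k\|_M<+\infty$. Then for all $k\ge1$, $\|z_k-z^*\|_M\le W/\eta$ and $a_k\|z_k-z_{k-1}\|_M\le 2W$.
   Context: $\|z\|_M^2:=\langle Mz,z\rangle$. *)

theory Defs
  imports "HOL-Analysis.Analysis"
begin

definition sym_pos_def_mat :: "real ^'n ^'n \<Rightarrow> bool" where
  "sym_pos_def_mat M \<longleftrightarrow> transpose M = M \<and> (\<forall>x. x \<noteq> 0 \<longrightarrow> (M *v x) \<bullet> x > 0)"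

definition normM :: "real ^'n ^'n \<Rightarrow> real ^'n \<Rightarrow> real" where
  "normM M z = sqrt ((M *v z) \<bullet> z)"

end

theory Submission
  imports Defs
begin

text \<open>Since \<open>M\<close> is symmetric positive definite, \<open>normM M\<close> is a norm, so
  \<open>(\<eta> + a\<^sub>k) (z\<^sub>k - z\<^sup>*) = w\<^sub>k + a\<^sub>k (z\<^sub>k\<^sub>-\<^sub>1 - z\<^sup>*)\<close> gives
  \<open>(\<eta> + a\<^sub>k) \<parallel>z\<^sub>k - z\<^sup>*\<parallel> \<le> W + a\<^sub>k \<parallel>z\<^sub>k\<^sub>-\<^sub>1 - z\<^sup>*\<parallel>\<close>, and the bound \<open>W/\<eta>\<close>
  propagates by induction from \<open>k = 1\<close>, where \<open>w\<^sub>1 = \<eta> (z\<^sub>1 - z\<^sup>*)\<close>.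
  Then \<open>a\<^sub>k (z\<^sub>k - z\<^sub>k\<^sub>-\<^sub>1) = w\<^sub>k - \<eta> (z\<^sub>k - z\<^sup>*)\<close> has norm at most \<open>2W\<close>.\<close>

lemma quadratic_nonneg_imp_square_le:
  fixes p q r :: real
  assumes "0 \<le> q" and nonneg: "\<And>t. 0 \<le> p + 2 * t * r + t\<^sup>2 * q"
  shows "r\<^sup>2 \<le> p * q"
proof (cases "q = 0")
  case True
  have "r = 0"
  proof (rule ccontr)
    assume "r \<noteq> 0"
    with True nonneg[of "- (p + 1) / (2 * r)"] show False
      by (simp add: field_simps)
  qed
  with True show ?thesis by simp
next
  case False
  have "0 \<le> p + 2 * (- r / q) * r + (- r / q)\<^sup>2 * q" by (rule nonneg)
  also have "\<dots> = (p * q - r\<^sup>2) / q"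
    using False by (simp add: power2_eq_square field_simps)
  finally show ?thesis
    using \<open>0 \<le> q\<close> False by (simp add: zero_le_divide_iff)
qed

lemma sym_matrix_form_commute:
  fixes M :: "real ^'n ^'n"
  assumes "transpose M = M"
  shows "(M *v x) \<bullet> y = (M *v y) \<bullet> x"
  by (metis assms dot_lmul_matrix inner_commute vector_transpose_matrix)

lemma sym_pos_def_mat_form_nonneg:
  assumes "sym_pos_def_mat M"
  shows "0 \<le> (M *v x) \<bullet> x"
  using assms unfolding sym_pos_def_mat_def
  by (cases "x = 0") (auto intro: less_imp_le)

lemma sym_matrix_form_add_scaleR:
  fixes M :: "real ^'n ^'n"
  assumes "transpose M = M"
  shows "(M *v (x + t *\<^sub>R y)) \<bullet> (x + t *\<^sub>R y)
     = (M *v x) \<bullet> x + 2 * t * ((M *v x) \<bullet> y) + t\<^sup>2 * ((M *v y) \<bullet> y)"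
  using sym_matrix_form_commute[OF assms, of y x]
  by (simp add: matrix_vector_right_distrib matrix_vector_mult_scaleR inner_add_left
      inner_add_right power2_eq_square algebra_simps)

lemma sym_pos_def_mat_cauchy_schwarz:
  assumes "sym_pos_def_mat M"
  shows "((M *v x) \<bullet> y)\<^sup>2 \<le> ((M *v x) \<bullet> x) * ((M *v y) \<bullet> y)"
proof (rule quadratic_nonneg_imp_square_le)
  show "0 \<le> (M *v y) \<bullet> y" by (rule sym_pos_def_mat_form_nonneg[OF assms])
  have "transpose M = M" using assms unfolding sym_pos_def_mat_def by simp
  then show "0 \<le> (M *v x) \<bullet> x + 2 * t * ((M *v x) \<bullet> y) + t\<^sup>2 * ((M *v y) \<bullet> y)" for t
    using sym_pos_def_mat_form_nonneg[OF assms] by (metis sym_matrix_form_add_scaleR)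
qed

lemma normM_scaleR: "normM M (c *\<^sub>R x) = \<bar>c\<bar> * normM M x"
proof -
  have "(M *v (c *\<^sub>R x)) \<bullet> (c *\<^sub>R x) = c\<^sup>2 * ((M *v x) \<bullet> x)"
    by (simp add: matrix_vector_mult_scaleR power2_eq_square)
  then show ?thesis by (simp add: normM_def real_sqrt_mult)
qed

lemma normM_triangle:
  assumes "sym_pos_def_mat M"
  shows "normM M (x + y) \<le> normM M x + normM M y"
proof -
  define p where "p = (M *v x) \<bullet> x"
  define q where "q = (M *v y) \<bullet> y"
  define r where "r = (M *v x) \<bullet> y"
  have "0 \<le> p" "0 \<le> q"
    unfolding p_def q_def by (simp_all add: sym_pos_def_mat_form_nonneg[OF assms])
  have "transpose M = M" using assms unfolding sym_pos_def_mat_def by simp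
  then have expand: "(M *v (x + y)) \<bullet> (x + y) = p + 2 * r + q"
    using sym_matrix_form_add_scaleR[of M x 1 y] unfolding p_def q_def r_def by simp
  have "r \<le> sqrt (p * q)"
    using sym_pos_def_mat_cauchy_schwarz[OF assms, of x y] real_le_rsqrt
    unfolding p_def q_def r_def by blast
  then have "p + 2 * r + q \<le> (sqrt p + sqrt q)\<^sup>2"
    using \<open>0 \<le> p\<close> \<open>0 \<le> q\<close> by (simp add: real_sqrt_mult power2_eq_square algebra_simps)
  then show ?thesis
    unfolding normM_def expand p_def [symmetric] q_def [symmetric]
    using \<open>0 \<le> p\<close> \<open>0 \<le> q\<close> by (intro real_le_lsqrt) simp_all
qed

context
  fixes N :: "'a::real_vector \<Rightarrow> real"
  assumes N_triangle: "\<And>x y. N (x + y) \<le> N x + N y"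
    and N_scaleR: "\<And>c x. N (c *\<^sub>R x) = \<bar>c\<bar> * N x"
begin

lemma seminorm_add_scaleR_le: "N (x + c *\<^sub>R y) \<le> N x + \<bar>c\<bar> * N y"
  using N_triangle N_scaleR by metis

lemma inertial_dist_bound_step:
  assumes "0 < \<eta>" "0 \<le> c"
    and w_bound: "N (\<eta> *\<^sub>R (x - xs) + c *\<^sub>R (x - y)) \<le> W"
    and y_bound: "N (y - xs) \<le> W / \<eta>"
  shows "N (x - xs) \<le> W / \<eta>"
proof -
  have "(\<eta> + c) * N (x - xs) = N ((\<eta> *\<^sub>R (x - xs) + c *\<^sub>R (x - y)) + c *\<^sub>R (y - xs))"
    using assms(1,2) N_scaleR[of "\<eta> + c" "x - xs"] by (simp add: algebra_simps)
  also have "\<dots> \<le> W + c * N (y - xs)"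
    using seminorm_add_scaleR_le[of _ c "y - xs"] w_bound \<open>0 \<le> c\<close> by (smt (verit))
  also have "\<dots> \<le> W + c * (W / \<eta>)"
    using mult_left_mono[OF y_bound \<open>0 \<le> c\<close>] by simp
  also have "\<dots> = (\<eta> + c) * (W / \<eta>)"
    using \<open>0 < \<eta>\<close> by (simp add: field_simps)
  finally show ?thesis
    by (rule mult_left_le_imp_le) (use assms(1,2) in simp)
qed

lemma inertial_increment_bound:
  assumes "0 < \<eta>" "0 \<le> c"
    and w_bound: "N (\<eta> *\<^sub>R (x - xs) + c *\<^sub>R (x - y)) \<le> W"
    and x_bound: "N (x - xs) \<le> W / \<eta>"
  shows "c * N (x - y) \<le> 2 * W"
proof -
  have "c * N (x - y) = N ((\<eta> *\<^sub>R (x - xs) + c *\<^sub>R (x - y)) + (- \<eta>) *\<^sub>R (x - xs))"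
    using N_scaleR[of c "x - y"] \<open>0 \<le> c\<close> by simp
  also have "\<dots> \<le> W + \<eta> * N (x - xs)"
    using seminorm_add_scaleR_le[of _ "- \<eta>" "x - xs"] w_bound \<open>0 < \<eta>\<close> by (smt (verit))
  also have "\<dots> \<le> 2 * W"
    using x_bound \<open>0 < \<eta>\<close> by (simp add: field_simps)
  finally show ?thesis .
qed

lemma inertial_dist_bound:
  fixes a :: "nat \<Rightarrow> real" and z :: "nat \<Rightarrow> 'a" and k :: nat
  assumes "0 < \<eta>" and a_nonneg: "\<forall>k\<ge>1. 0 \<le> a k" and "z 1 = z 0"
    and w_bound: "\<And>k. 1 \<le> k \<Longrightarrow> N (\<eta> *\<^sub>R (z k - zs) + a k *\<^sub>R (z k - z (k - 1))) \<le> W"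
    and "1 \<le> k"
  shows "N (z k - zs) \<le> W / \<eta>"
  using \<open>1 \<le> k\<close>
proof (induction k rule: nat_induct_at_least)
  case base
  have "\<eta> *\<^sub>R (z 1 - zs) + a 1 *\<^sub>R (z 1 - z (1 - 1)) = \<eta> *\<^sub>R (z 1 - zs)"
    using \<open>z 1 = z 0\<close> by simp
  then have "\<eta> * N (z 1 - zs) \<le> W"
    using w_bound[of 1] N_scaleR[of \<eta>] \<open>0 < \<eta>\<close> by (metis abs_of_pos order_refl)
  then show ?case
    using \<open>0 < \<eta>\<close> by (simp add: pos_le_divide_eq mult.commute)
next
  case (Suc k)
  have "0 \<le> a (Suc k)" using a_nonneg by simp
  moreover have "N (\<eta> *\<^sub>R (z (Suc k) - zs) + a (Suc k) *\<^sub>R (z (Suc k) - z k)) \<le> W"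
    using w_bound[of "Suc k"] by (simp only: diff_Suc_1 le_add1 plus_1_eq_Suc)
  ultimately show ?case
    using inertial_dist_bound_step[OF \<open>0 < \<eta>\<close>] Suc.IH by blast
qed

end

theorem lemmaA2:
  fixes M :: "real ^'n ^'n" and \<eta> :: real and a :: "nat \<Rightarrow> real"
    and z :: "nat \<Rightarrow> real ^'n" and zs :: "real ^'n" and W :: real
  assumes "sym_pos_def_mat M"
    and "\<eta> > 0"
    and "\<forall>k\<ge>1. a k \<ge> 0"
    and "z 1 = z 0"
    and "bdd_above ((\<lambda>k. normM M (\<eta> *\<^sub>R (z k - zs) + a k *\<^sub>R (z k - z (k - 1)))) ` {1..})"
    and "W = (SUP k\<in>{1..}. normM M (\<eta> *\<^sub>R (z k - zs) + a k *\<^sub>R (z k - z (k - 1))))"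
  shows "\<forall>k\<ge>1. normM M (z k - zs) \<le> W / \<eta> \<and> a k * normM M (z k - z (k - 1)) \<le> 2 * W"
proof -
  note seminorm = normM_triangle[OF assms(1)] normM_scaleR
  have w_bound: "normM M (\<eta> *\<^sub>R (z k - zs) + a k *\<^sub>R (z k - z (k - 1))) \<le> W" if "k \<ge> 1" for k
    unfolding assms(6) using assms(5) that by (intro cSUP_upper) auto
  have dist_bound: "normM M (z k - zs) \<le> W / \<eta>" if "k \<ge> 1" for k
    using inertial_dist_bound[OF seminorm assms(2-4) w_bound that] .
  show ?thesis
    using inertial_increment_bound[OF seminorm assms(2)] w_bound dist_bound assms(3) by blast
qed

end
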